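(* Let $n\ge 1$ be an integer and let $M=(M_0,\dots,M_{2n})^T\in\mathbb R^{2n+1}$. For $\sigma>0$ define $M^*(\sigma)=(M_0^*(\sigma),\dots,M_{2n}^*(\sigma))$ by $$M_j^*(\sigma)=\sum_{k=0}^j b_k\sigma^k\frac{j!}{(j-k)!}M_{j-k},$$ and set $P_n(\sigma;M)=\det H_n(M^*(\sigma))$. The following statements are equivalent: (i) There exists a unique $W=(w_1,u_1,\dots,w_n,u_n,\sigma)\in\Omega:=\Omega'\times\{\sigma>0\}$, where $$\Omega'=\{(w_1,u_1,\dots,w_n,u_n)\in\mathbb R^{2n}: w_i>0\ \forall i,\ u_1<\dots<u_n\},$$ such that $\mathcal M(W)=M$. (ii) The equation $P_n(\sigma;M)=0$ has a unique positive root $\sigma_0$ such that the Hankel matrix $H_{n-1}(M^*(\sigma_0))$ is positive definite.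
   Context: Let $\mathcal K:\mathbb R\to[0,\infty)$ be a kernel with $\mathfrak m_j:=\int_{\mathbb R}\xi^j\mathcal K(\xi)\,d\xi<\infty$ for all $j\in\mathbb N$; the kernel is assumed normalized: $\mathfrak m_0=1$, $\mathfrak m_1=0$, $\mathfrak m_2=1$. For $u\in\mathbb R$, $\sigma>0$ let $\Delta_j(u,\sigma)=\int_{\mathbb R}\xi^j\frac1\sigma\mathcal K\!\left(\frac{\xi-u}{\sigma}\right)d\xi=\sum_{k=0}^j\binom jk\mathfrak m_k\sigma^ku^{j-k}$. For $W=(w_1,u_1,\dots,w_n,u_n,\sigma)$ with $\sigma>0$, the map $\mathcal M(W)=(M_0,\dots,M_{2n})^T$ is given by $M_j=\sum_{i=1}^n w_i\Delta_j(u_i,\sigma)$, $j=0,\dots,2n$. The numbers $b_j$ are defined recursively by $b_0=1$ and $b_j=-\sum_{k=1}^j\frac{\mathfrak m_k}{k!}b_{j-k}$ for $j\ge1$. For a vector $N=(N_0,\dots,N_{2n})$ and $k\le n$, the Hankel matrix $H_k(N)$ is the $(k+1)\times(k+1)$ matrix with $(p,q)$ entry $N_{p+q}$, $0\le p,q\le k$. *)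

theory Defs
  imports "HOL-Analysis.Analysis" "Jordan_Normal_Form.Determinant"
begin

definition kmom :: "(real \<Rightarrow> real) \<Rightarrow> nat \<Rightarrow> real" where
  "kmom K j = (LINT x|lborel. x ^ j * K x)"

definition Delta :: "(nat \<Rightarrow> real) \<Rightarrow> nat \<Rightarrow> real \<Rightarrow> real \<Rightarrow> real" where
  "Delta m j u \<sigma> = (\<Sum>k\<le>j. real (j choose k) * m k * \<sigma> ^ k * u ^ (j - k))"

text \<open>The moment map, components w, u given as lists of length n (0-based indices).\<close>
definition Mmap :: "(nat \<Rightarrow> real) \<Rightarrow> real list \<Rightarrow> real list \<Rightarrow> real \<Rightarrow> nat \<Rightarrow> real" where
  "Mmap m w u \<sigma> j = (\<Sum>i<length w. w ! i * Delta m j (u ! i) \<sigma>)"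

function bcoef :: "(nat \<Rightarrow> real) \<Rightarrow> nat \<Rightarrow> real" where
  "bcoef m j = (if j = 0 then 1
     else - (\<Sum>k\<in>{1..j}. m k / fact k * bcoef m (j - k)))"
  by pat_completeness auto
termination
  by (relation "Wellfounded.measure (\<lambda>(m, j). j)") auto

definition Mstar :: "(nat \<Rightarrow> real) \<Rightarrow> (nat \<Rightarrow> real) \<Rightarrow> real \<Rightarrow> nat \<Rightarrow> real" where
  "Mstar m M \<sigma> j = (\<Sum>k\<le>j. bcoef m k * \<sigma> ^ k * (fact j / fact (j - k)) * M (j - k))"

definition hankel :: "nat \<Rightarrow> (nat \<Rightarrow> real) \<Rightarrow> real mat" where
  "hankel k N = Matrix.mat (k + 1) (k + 1) (\<lambda>(p, q). N (p + q))"

definition pos_def_mat :: "real mat \<Rightarrow> bool" where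
  "pos_def_mat A \<longleftrightarrow> A \<in> carrier_mat (dim_row A) (dim_row A) \<and> A\<^sup>T = A \<and>
     (\<forall>v \<in> carrier_vec (dim_row A). v \<noteq> 0\<^sub>v (dim_row A) \<longrightarrow> v \<bullet> (A *\<^sub>v v) > 0)"

definition Pn :: "(nat \<Rightarrow> real) \<Rightarrow> nat \<Rightarrow> (nat \<Rightarrow> real) \<Rightarrow> real \<Rightarrow> real" where
  "Pn m n M \<sigma> = Determinant.det (hankel n (Mstar m M \<sigma>))"

end

theory Submission
  imports
    Defs
    "HOL-Computational_Algebra.Formal_Power_Series"
    "HOL-Computational_Algebra.Fundamental_Theorem_Algebra"
    "Jordan_Normal_Form.Char_Poly"
begin

text \<open>
  Expanding \<open>\<Delta>\<^sub>j\<close>, the equations \<open>\<M>(W) = M\<close> say that \<open>M\<close> is the binomial convolution of the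
  power moments \<open>N\<^sub>j = \<Sum> w\<^sub>i u\<^sub>i\<^sup>j\<close> of the discrete measure \<open>\<Sum> w\<^sub>i \<delta>\<^sub>u\<^sub>i\<close> with the scaled kernel
  moments \<open>m\<^sub>k \<sigma>\<^sup>k\<close>. On exponential generating functions this convolution is multiplication by
  \<open>\<Sum> m\<^sub>k \<sigma>\<^sup>k t\<^sup>k / k!\<close>, whose reciprocal is \<open>\<Sum> b\<^sub>k \<sigma>\<^sup>k t\<^sup>k\<close>, so the equations hold iff \<open>N = M\<^sup>*(\<sigma>)\<close>.
  For fixed \<open>\<sigma>\<close> this is the truncated Hamburger moment problem with \<open>n\<close> atoms: \<open>N\<^sub>0, \<dots>, N\<^sub>2\<^sub>n\<close>
  are the moments of \<open>n\<close> positive weights at distinct nodes iff \<open>H\<^sub>n\<^sub>-\<^sub>1(N)\<close> is positive definite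
  and \<open>det H\<^sub>n(N) = 0\<close>, and then nodes and weights are unique. In terms of the Riesz functional
  \<open>L(p) = \<Sum> p\<^sub>j N\<^sub>j\<close>, positive definiteness says \<open>L(s\<^sup>2) > 0\<close> for \<open>deg s < n\<close>, and \<open>det H\<^sub>n(N) = 0\<close>
  gives a nonzero \<open>q\<close> of degree at most \<open>n\<close> with \<open>L(g q) = 0\<close> for all \<open>deg g \<le> n\<close>. Positivity forces
  \<open>q\<close> to have degree \<open>n\<close> and \<open>n\<close> distinct real roots; these are the nodes, and the weights are the
  values of \<open>L\<close> on the Lagrange basis (Gauss quadrature).
\<close>

declare bcoef.simps [simp del]

section \<open>Exponential generating functions\<close>

definition smoothed_moments :: "(nat \<Rightarrow> real) \<Rightarrow> real \<Rightarrow> (nat \<Rightarrow> real) \<Rightarrow> nat \<Rightarrow> real" where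
  "smoothed_moments m \<sigma> X j = (\<Sum>k\<le>j. real (j choose k) * m k * \<sigma> ^ k * X (j - k))"

definition discrete_moments :: "real list \<Rightarrow> real list \<Rightarrow> nat \<Rightarrow> real" where
  "discrete_moments w u j = (\<Sum>i<length w. w ! i * u ! i ^ j)"

definition egf :: "(nat \<Rightarrow> real) \<Rightarrow> real fps" where
  "egf X = Abs_fps (\<lambda>j. X j / fact j)"

lemma egf_inject: "egf X = egf Y \<longleftrightarrow> X = Y"
proof
  assume "egf X = egf Y"
  then have "fps_nth (egf X) j = fps_nth (egf Y) j" for j by simp
  then show "X = Y" by (auto simp: egf_def)
qed simp

lemma egf_smoothed_moments:
  "egf (smoothed_moments m \<sigma> X) = Abs_fps (\<lambda>k. m k * \<sigma> ^ k / fact k) * egf X"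
proof (rule fps_ext)
  fix j
  have "fps_nth (egf (smoothed_moments m \<sigma> X)) j
      = (\<Sum>k\<le>j. m k * \<sigma> ^ k / fact k * (X (j - k) / fact (j - k)))"
    unfolding egf_def smoothed_moments_def fps_nth_Abs_fps sum_divide_distrib
    by (rule sum.cong) (simp_all add: binomial_fact field_simps)
  then show "fps_nth (egf (smoothed_moments m \<sigma> X)) j
      = fps_nth (Abs_fps (\<lambda>k. m k * \<sigma> ^ k / fact k) * egf X) j"
    by (simp add: fps_mult_nth egf_def atLeast0AtMost)
qed

lemma egf_Mstar: "egf (Mstar m X \<sigma>) = Abs_fps (\<lambda>k. bcoef m k * \<sigma> ^ k) * egf X"
proof (rule fps_ext)
  fix j
  have "fps_nth (egf (Mstar m X \<sigma>)) j = (\<Sum>k\<le>j. bcoef m k * \<sigma> ^ k * (X (j - k) / fact (j - k)))"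
    unfolding egf_def Mstar_def fps_nth_Abs_fps sum_divide_distrib
    by (rule sum.cong) (simp_all add: field_simps)
  then show "fps_nth (egf (Mstar m X \<sigma>)) j = fps_nth (Abs_fps (\<lambda>k. bcoef m k * \<sigma> ^ k) * egf X) j"
    by (simp add: fps_mult_nth egf_def atLeast0AtMost)
qed

lemma moment_egf_mult_bcoef:
  assumes "m 0 = 1"
  shows "Abs_fps (\<lambda>k. m k * \<sigma> ^ k / fact k) * Abs_fps (\<lambda>k. bcoef m k * \<sigma> ^ k) = 1"
proof (rule fps_ext)
  fix j
  have "fps_nth (Abs_fps (\<lambda>k. m k * \<sigma> ^ k / fact k) * Abs_fps (\<lambda>k. bcoef m k * \<sigma> ^ k)) j
      = \<sigma> ^ j * (\<Sum>i=0..j. m i / fact i * bcoef m (j - i))"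
    unfolding fps_mult_nth fps_nth_Abs_fps sum_distrib_left
    by (rule sum.cong) (simp_all add: field_simps flip: power_add)
  also have "(\<Sum>i=0..j. m i / fact i * bcoef m (j - i))
      = bcoef m j + (\<Sum>i=1..j. m i / fact i * bcoef m (j - i))"
    by (simp add: sum.atLeast_Suc_atMost assms)
  also have "\<dots> = (if j = 0 then 1 else 0)"
    by (simp add: bcoef.simps[of m j] bcoef.simps[of m 0])
  finally show "fps_nth (Abs_fps (\<lambda>k. m k * \<sigma> ^ k / fact k) * Abs_fps (\<lambda>k. bcoef m k * \<sigma> ^ k)) j
      = fps_nth 1 j"
    by simp
qed

lemma Mstar_smoothed_moments:
  assumes "m 0 = 1"
  shows "Mstar m (smoothed_moments m \<sigma> X) \<sigma> = X"
proof -
  have "egf (Mstar m (smoothed_moments m \<sigma> X) \<sigma>)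
      = (Abs_fps (\<lambda>k. m k * \<sigma> ^ k / fact k) * Abs_fps (\<lambda>k. bcoef m k * \<sigma> ^ k)) * egf X"
    by (simp add: egf_Mstar egf_smoothed_moments ac_simps)
  then show ?thesis
    by (simp add: moment_egf_mult_bcoef[of m, OF assms] egf_inject)
qed

lemma smoothed_moments_Mstar:
  assumes "m 0 = 1"
  shows "smoothed_moments m \<sigma> (Mstar m X \<sigma>) = X"
proof -
  have "egf (smoothed_moments m \<sigma> (Mstar m X \<sigma>))
      = (Abs_fps (\<lambda>k. m k * \<sigma> ^ k / fact k) * Abs_fps (\<lambda>k. bcoef m k * \<sigma> ^ k)) * egf X"
    by (simp add: egf_Mstar egf_smoothed_moments ac_simps)
  then show ?thesis
    by (simp add: moment_egf_mult_bcoef[of m, OF assms] egf_inject)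
qed

lemma smoothed_moments_cong:
  "(\<And>i. i \<le> j \<Longrightarrow> X i = Y i) \<Longrightarrow> smoothed_moments m \<sigma> X j = smoothed_moments m \<sigma> Y j"
  unfolding smoothed_moments_def by (rule sum.cong) auto

lemma Mstar_cong: "(\<And>i. i \<le> j \<Longrightarrow> X i = Y i) \<Longrightarrow> Mstar m X \<sigma> j = Mstar m Y \<sigma> j"
  unfolding Mstar_def by (rule sum.cong) auto

text \<open>Both transforms are lower triangular, so they stay mutually inverse on truncated sequences.\<close>

lemma smoothed_moments_eq_iff_Mstar_eq:
  assumes "m 0 = 1"
  shows "(\<forall>j\<le>J. smoothed_moments m \<sigma> X j = M j) \<longleftrightarrow> (\<forall>j\<le>J. Mstar m M \<sigma> j = X j)"
proof safe
  fix j assume "\<forall>j\<le>J. smoothed_moments m \<sigma> X j = M j" and "j \<le> J"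
  then have "Mstar m M \<sigma> j = Mstar m (smoothed_moments m \<sigma> X) \<sigma> j"
    by (intro Mstar_cong) simp
  then show "Mstar m M \<sigma> j = X j"
    by (simp add: Mstar_smoothed_moments[of m, OF assms])
next
  fix j assume "\<forall>j\<le>J. Mstar m M \<sigma> j = X j" and "j \<le> J"
  then have "smoothed_moments m \<sigma> X j = smoothed_moments m \<sigma> (Mstar m M \<sigma>) j"
    by (intro smoothed_moments_cong) simp
  then show "smoothed_moments m \<sigma> X j = M j"
    by (simp add: smoothed_moments_Mstar[of m, OF assms])
qed

lemma Mmap_eq_smoothed_moments: "Mmap m w u \<sigma> j = smoothed_moments m \<sigma> (discrete_moments w u) j"
proof -
  have "Mmap m w u \<sigma> j
      = (\<Sum>i<length w. \<Sum>k\<le>j. real (j choose k) * m k * \<sigma> ^ k * (w ! i * u ! i ^ (j - k)))"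
    unfolding Mmap_def Delta_def by (simp add: sum_distrib_left ac_simps)
  also have "\<dots> = smoothed_moments m \<sigma> (discrete_moments w u) j"
    unfolding smoothed_moments_def discrete_moments_def sum_distrib_left by (rule sum.swap)
  finally show ?thesis .
qed

section \<open>The Riesz functional and Hankel matrices\<close>

definition riesz :: "(nat \<Rightarrow> 'a::comm_semiring_0) \<Rightarrow> 'a poly \<Rightarrow> 'a" where
  "riesz N p = (\<Sum>j\<le>degree p. coeff p j * N j)"

lemma riesz_eq_sum_atMost: "degree p \<le> k \<Longrightarrow> riesz N p = (\<Sum>j\<le>k. coeff p j * N j)"
  unfolding riesz_def by (rule sum.mono_neutral_left) (auto simp: coeff_eq_0)

lemma riesz_0 [simp]: "riesz N 0 = 0"
  by (simp add: riesz_def)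

lemma riesz_add: "riesz N (p + q) = riesz N p + riesz N q"
proof -
  let ?k = "max (degree p) (degree q)"
  have "riesz N (p + q) = (\<Sum>j\<le>?k. coeff (p + q) j * N j)"
    by (rule riesz_eq_sum_atMost) (rule degree_add_le_max)
  also have "\<dots> = riesz N p + riesz N q"
    by (simp add: riesz_eq_sum_atMost[of p ?k] riesz_eq_sum_atMost[of q ?k] sum.distrib distrib_right)
  finally show ?thesis .
qed

lemma riesz_smult: "riesz N (Polynomial.smult c p) = c * riesz N p"
proof -
  have "riesz N (Polynomial.smult c p) = (\<Sum>j\<le>degree p. coeff (Polynomial.smult c p) j * N j)"
    by (rule riesz_eq_sum_atMost) (rule degree_smult_le)
  then show ?thesis
    by (simp add: riesz_def sum_distrib_left mult.assoc)
qed

lemma riesz_sum: "riesz N (\<Sum>a\<in>A. f a) = (\<Sum>a\<in>A. riesz N (f a))"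
  by (induction A rule: infinite_finite_induct) (simp_all add: riesz_add)

lemma riesz_monom: "riesz N (monom c k) = c * N k"
  by (simp add: riesz_eq_sum_atMost[OF degree_monom_le] coeff_monom mult_delta_left)

lemma riesz_mult_eq_sum:
  fixes g q :: "'a::comm_semiring_1 poly"
  assumes "degree g \<le> k"
  shows "riesz N (g * q) = (\<Sum>p\<le>k. coeff g p * riesz N (monom 1 p * q))"
proof -
  have "g * q = (\<Sum>p\<le>k. Polynomial.smult (coeff g p) (monom 1 p * q))"
    by (subst poly_as_sum_of_monoms'[OF assms, symmetric])
      (simp add: sum_distrib_right smult_monom flip: mult_smult_left)
  then show ?thesis
    by (simp add: riesz_sum riesz_smult)
qed

lemma riesz_discrete_moments:
  assumes "\<forall>j\<le>J. N j = discrete_moments w u j" and "degree f \<le> J"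
  shows "riesz N f = (\<Sum>i<length w. w ! i * poly f (u ! i))"
proof -
  have "riesz N f = (\<Sum>j\<le>degree f. \<Sum>i<length w. coeff f j * (w ! i * u ! i ^ j))"
    unfolding riesz_def using assms
    by (intro sum.cong) (auto simp: discrete_moments_def sum_distrib_left)
  also have "\<dots> = (\<Sum>i<length w. w ! i * poly f (u ! i))"
    by (subst sum.swap) (simp add: poly_altdef sum_distrib_left ac_simps)
  finally show ?thesis .
qed

definition poly_of_vec :: "'a::comm_monoid_add vec \<Rightarrow> 'a poly" where
  "poly_of_vec v = (\<Sum>i<dim_vec v. monom (v $ i) i)"

lemma coeff_poly_of_vec: "coeff (poly_of_vec v) i = (if i < dim_vec v then v $ i else 0)"
  by (simp add: poly_of_vec_def coeff_sum coeff_monom)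

lemma degree_poly_of_vec: "dim_vec v = Suc k \<Longrightarrow> degree (poly_of_vec v) \<le> k"
  by (rule degree_le) (simp add: coeff_poly_of_vec)

lemma poly_of_vec_eq_0_iff: "poly_of_vec v = 0 \<longleftrightarrow> v = 0\<^sub>v (dim_vec v)"
  by (auto simp: poly_eq_iff vec_eq_iff coeff_poly_of_vec)

lemma poly_of_vec_vec_coeff: "degree p < k \<Longrightarrow> poly_of_vec (vec k (coeff p)) = p"
  by (auto simp: poly_eq_iff coeff_poly_of_vec coeff_eq_0)

lemma dim_row_hankel [simp]: "dim_row (hankel k N) = Suc k"
  by (simp add: hankel_def)

lemma hankel_mult_vec_nth:
  assumes "v \<in> carrier_vec (Suc k)" and "p \<le> k"
  shows "(hankel k N *\<^sub>v v) $ p = riesz N (monom 1 p * poly_of_vec v)"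
proof -
  have "(hankel k N *\<^sub>v v) $ p = (\<Sum>b<Suc k. v $ b * N (p + b))"
    using assms by (simp add: hankel_def scalar_prod_def lessThan_atLeast0 ac_simps)
  also have "\<dots> = riesz N (monom 1 p * poly_of_vec v)"
    using assms unfolding poly_of_vec_def sum_distrib_left
    by (simp add: mult_monom riesz_sum riesz_monom del: sum.lessThan_Suc)
  finally show ?thesis .
qed

lemma hankel_quadratic_form:
  assumes "v \<in> carrier_vec (Suc k)"
  shows "v \<bullet> (hankel k N *\<^sub>v v) = riesz N (poly_of_vec v * poly_of_vec v)"
proof -
  have "riesz N (poly_of_vec v * poly_of_vec v)
      = (\<Sum>p\<le>k. v $ p * riesz N (monom 1 p * poly_of_vec v))"
    using assms by (simp add: riesz_mult_eq_sum[OF degree_poly_of_vec] coeff_poly_of_vec)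
  also have "\<dots> = (\<Sum>p<Suc k. v $ p * (hankel k N *\<^sub>v v) $ p)"
    using assms by (intro sum.cong) (auto simp: hankel_mult_vec_nth simp del: index_mult_mat_vec)
  also have "\<dots> = v \<bullet> (hankel k N *\<^sub>v v)"
    using assms by (simp add: scalar_prod_def atLeast0LessThan)
  finally show ?thesis ..
qed

lemma hankel_transpose: "(hankel k N)\<^sup>T = hankel k N"
  by (rule eq_matI) (auto simp: hankel_def add.commute)

lemma pos_def_hankel_iff:
  "pos_def_mat (hankel k N) \<longleftrightarrow> (\<forall>s. s \<noteq> 0 \<longrightarrow> degree s \<le> k \<longrightarrow> 0 < riesz N (s * s))"
proof
  assume pd: "pos_def_mat (hankel k N)"
  show "\<forall>s. s \<noteq> 0 \<longrightarrow> degree s \<le> k \<longrightarrow> 0 < riesz N (s * s)"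
  proof safe
    fix s :: "real poly" assume "s \<noteq> 0" "degree s \<le> k"
    then have "poly_of_vec (vec (Suc k) (coeff s)) = s" "vec (Suc k) (coeff s) \<noteq> 0\<^sub>v (Suc k)"
      using poly_of_vec_eq_0_iff[of "vec (Suc k) (coeff s)"] by (auto simp: poly_of_vec_vec_coeff)
    with pd show "0 < riesz N (s * s)"
      unfolding pos_def_mat_def by (metis dim_row_hankel hankel_quadratic_form vec_carrier)
  qed
next
  assume "\<forall>s. s \<noteq> 0 \<longrightarrow> degree s \<le> k \<longrightarrow> 0 < riesz N (s * s)"
  then have "0 < v \<bullet> (hankel k N *\<^sub>v v)" if "v \<in> carrier_vec (Suc k)" "v \<noteq> 0\<^sub>v (Suc k)" for v
    using that by (simp add: hankel_quadratic_form degree_poly_of_vec poly_of_vec_eq_0_iff)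
  then show "pos_def_mat (hankel k N)"
    by (simp add: pos_def_mat_def hankel_transpose) (simp add: hankel_def)
qed

definition annihilator :: "(nat \<Rightarrow> real) \<Rightarrow> nat \<Rightarrow> real poly \<Rightarrow> bool" where
  "annihilator N k q \<longleftrightarrow> q \<noteq> 0 \<and> degree q \<le> k \<and> (\<forall>g. degree g \<le> k \<longrightarrow> riesz N (g * q) = 0)"

lemma hankel_mult_vec_eq_0_iff:
  assumes v: "v \<in> carrier_vec (Suc k)"
  shows "hankel k N *\<^sub>v v = 0\<^sub>v (Suc k) \<longleftrightarrow> (\<forall>g. degree g \<le> k \<longrightarrow> riesz N (g * poly_of_vec v) = 0)"
proof
  assume "hankel k N *\<^sub>v v = 0\<^sub>v (Suc k)"
  then have "\<forall>p\<le>k. riesz N (monom 1 p * poly_of_vec v) = 0"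
    using v by (metis hankel_mult_vec_nth index_zero_vec(1) le_imp_less_Suc)
  then show "\<forall>g. degree g \<le> k \<longrightarrow> riesz N (g * poly_of_vec v) = 0"
    by (simp add: riesz_mult_eq_sum)
next
  assume orth: "\<forall>g. degree g \<le> k \<longrightarrow> riesz N (g * poly_of_vec v) = 0"
  have "(hankel k N *\<^sub>v v) $ p = 0" if "p \<le> k" for p
  proof -
    have "degree (monom (1::real) p) \<le> k"
      using degree_monom_le that by (rule order.trans)
    then show ?thesis
      using orth hankel_mult_vec_nth[OF v that] by simp
  qed
  then show "hankel k N *\<^sub>v v = 0\<^sub>v (Suc k)"
    by (intro eq_vecI) (simp_all add: less_Suc_eq_le del: index_mult_mat_vec)
qed

lemma det_hankel_eq_0_iff: "det (hankel k N) = 0 \<longleftrightarrow> (\<exists>q. annihilator N k q)"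
proof
  assume "det (hankel k N) = 0"
  then obtain v where v: "v \<in> carrier_vec (Suc k)" "v \<noteq> 0\<^sub>v (Suc k)" "hankel k N *\<^sub>v v = 0\<^sub>v (Suc k)"
    using det_0_iff_vec_prod_zero[of "hankel k N" "Suc k"] by (auto simp: hankel_def)
  then have "annihilator N k (poly_of_vec v)"
    by (simp add: annihilator_def hankel_mult_vec_eq_0_iff poly_of_vec_eq_0_iff degree_poly_of_vec)
  then show "\<exists>q. annihilator N k q" ..
next
  assume "\<exists>q. annihilator N k q"
  then obtain q where q: "annihilator N k q" ..
  define v where "v = vec (Suc k) (coeff q)"
  have v: "v \<in> carrier_vec (Suc k)" and q_eq: "poly_of_vec v = q"
    using q by (simp_all add: v_def annihilator_def poly_of_vec_vec_coeff)
  with q have "v \<noteq> 0\<^sub>v (Suc k)" "hankel k N *\<^sub>v v = 0\<^sub>v (Suc k)"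
    by (auto simp: annihilator_def hankel_mult_vec_eq_0_iff poly_of_vec_eq_0_iff)
  with v show "det (hankel k N) = 0"
    using det_0_iff_vec_prod_zero[of "hankel k N" "Suc k"] by (auto simp: hankel_def)
qed

section \<open>Lagrange interpolation and real roots\<close>

definition lagrange_basis :: "'a::field list \<Rightarrow> nat \<Rightarrow> 'a poly" where
  "lagrange_basis u k = Polynomial.smult (1 / (\<Prod>j\<in>{..<length u} - {k}. u ! k - u ! j))
     (\<Prod>j\<in>{..<length u} - {k}. [:- (u ! j), 1:])"

lemma degree_lagrange_basis: "k < length u \<Longrightarrow> degree (lagrange_basis u k) \<le> length u - 1"
proof -
  assume k: "k < length u"
  have "degree (lagrange_basis u k) \<le> degree (\<Prod>j\<in>{..<length u} - {k}. [:- (u ! j), 1:])"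
    unfolding lagrange_basis_def by (rule degree_smult_le)
  also have "\<dots> \<le> (\<Sum>j\<in>{..<length u} - {k}. degree [:- (u ! j), 1:])"
    using degree_prod_sum_le[of "{..<length u} - {k}" "\<lambda>j. [:- (u ! j), 1:]"] by simp
  also have "\<dots> = length u - 1"
    using k by simp
  finally show ?thesis .
qed

lemma poly_lagrange_basis:
  assumes "distinct u" and "i < length u" and "k < length u"
  shows "poly (lagrange_basis u k) (u ! i) = (if i = k then 1 else 0)"
proof (cases "i = k")
  case True
  have "(\<Prod>j\<in>{..<length u} - {k}. u ! k - u ! j) \<noteq> 0"
    using assms by (auto simp: nth_eq_iff_index_eq)
  with True show ?thesis
    by (simp add: lagrange_basis_def poly_prod)
next
  case False
  then have "(\<Prod>j\<in>{..<length u} - {k}. poly [:- (u ! j), 1:] (u ! i)) = 0"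
    using assms by (intro prod_zero) (auto intro!: bexI[of _ i])
  with False show ?thesis
    by (simp add: lagrange_basis_def poly_prod)
qed

lemma lagrange_interpolation:
  assumes "distinct u" and "degree h < length u"
  shows "h = (\<Sum>k<length u. Polynomial.smult (poly h (u ! k)) (lagrange_basis u k))"
proof (rule poly_eqI_degree[of "set u"])
  fix x assume "x \<in> set u"
  then obtain i where i: "i < length u" "x = u ! i"
    by (auto simp: in_set_conv_nth)
  then show "poly h x = poly (\<Sum>k<length u. Polynomial.smult (poly h (u ! k)) (lagrange_basis u k)) x"
    using assms by (simp add: poly_sum poly_lagrange_basis if_distrib[of "(*) _"] cong: if_cong)
next
  show "degree h < card (set u)"
    using assms by (simp add: distinct_card)
  have "degree (\<Sum>k<length u. Polynomial.smult (poly h (u ! k)) (lagrange_basis u k)) \<le> length u - 1"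
    by (intro degree_sum_le order.trans[OF degree_smult_le] degree_lagrange_basis) auto
  then show "degree (\<Sum>k<length u. Polynomial.smult (poly h (u ! k)) (lagrange_basis u k)) < card (set u)"
    using assms by (simp add: distinct_card)
qed

lemma real_poly_quadratic_factor:
  fixes p :: "real poly"
  assumes "degree p > 0" and no_root: "\<And>x. poly p x \<noteq> 0"
  obtains a c where "c > 0" and "[:- a, 1:]^2 + [:c:] dvd p"
proof -
  let ?P = "map_poly complex_of_real p"
  have "\<not> constant (poly ?P)"
    using assms(1) by (simp add: constant_degree)
  then obtain z where z: "poly ?P z = 0"
    using fundamental_theorem_of_algebra by blast
  have "Im z \<noteq> 0"
  proof
    assume "Im z = 0"
    then have "z = of_real (Re z)"
      by (simp add: complex_eq_iff)
    with z no_root[of "Re z"] show False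
      by (metis of_real_hom.poly_map_poly of_real_eq_0_iff)
  qed
  have "poly ?P (cnj z) = 0"
    using z poly_cnj[of ?P z] by (simp add: map_poly_map_poly o_def)
  obtain S where S: "?P = [:- z, 1:] * S"
    using z by (auto simp: poly_eq_0_iff_dvd)
  have "poly S (cnj z) = 0"
    using \<open>poly ?P (cnj z) = 0\<close> \<open>Im z \<noteq> 0\<close> by (simp add: S complex_eq_iff)
  then have "[:- z, 1:] * [:- cnj z, 1:] dvd ?P"
    unfolding S by (intro mult_dvd_mono) (simp_all add: poly_eq_0_iff_dvd)
  also have "[:- z, 1:] * [:- cnj z, 1:] = map_poly of_real ([:- Re z, 1:]^2 + [:(Im z)^2:])"
    by (simp add: power2_eq_square complex_eq_iff algebra_simps)
  finally have "[:- Re z, 1:]^2 + [:(Im z)^2:] dvd p"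
    by (rule of_real_hom.dvd_map_poly_hom_imp_dvd)
  with \<open>Im z \<noteq> 0\<close> show ?thesis
    by (intro that) simp_all
qed

lemma card_roots_eq_degree:
  fixes p :: "real poly"
  assumes "p \<noteq> 0" and "\<And>a c. c \<ge> 0 \<Longrightarrow> \<not> [:- a, 1:]^2 + [:c:] dvd p"
  shows "card {x. poly p x = 0} = degree p"
  using assms
proof (induction "degree p" arbitrary: p rule: less_induct)
  case (less p)
  show ?case
  proof (cases "\<exists>t. poly p t = 0")
    case False
    then have "degree p = 0"
      using real_poly_quadratic_factor[of p] less.prems(2) by (metis less_eq_real_def not_gr0)
    with False show ?thesis
      by simp
  next
    case True
    then obtain t s where p: "p = [:- t, 1:] * s"
      by (auto simp: poly_eq_0_iff_dvd)
    have "s \<noteq> 0"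
      using less.prems(1) p by auto
    then have degree_p: "degree p = Suc (degree s)"
      unfolding p by (subst degree_mult_eq) auto
    have "poly s t \<noteq> 0"
    proof
      assume "poly s t = 0"
      then have "[:- t, 1:]^2 + [:0:] dvd p"
        unfolding p power2_eq_square pCons_0_0 add_0_right
        by (intro mult_dvd_mono) (simp_all add: poly_eq_0_iff_dvd)
      with less.prems(2) show False
        by blast
    qed
    have "card {x. poly s x = 0} = degree s"
    proof (rule less.hyps)
      show "degree s < degree p" "s \<noteq> 0"
        using degree_p \<open>s \<noteq> 0\<close> by simp_all
      show "\<not> [:- a, 1:]^2 + [:c:] dvd s" if "c \<ge> 0" for a c
        using less.prems(2)[OF that] dvd_mult[of _ s "[:- t, 1:]"] by (auto simp: p)
    qed
    moreover have "{x. poly p x = 0} = insert t {x. poly s x = 0}"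
      by (auto simp: p)
    ultimately show ?thesis
      using \<open>poly s t \<noteq> 0\<close> poly_roots_finite[OF \<open>s \<noteq> 0\<close>] degree_p by simp
  qed
qed

section \<open>The truncated moment problem with \<open>n\<close> atoms\<close>

definition atomic_moments :: "(nat \<Rightarrow> real) \<Rightarrow> nat \<Rightarrow> real list \<Rightarrow> real list \<Rightarrow> bool" where
  "atomic_moments N n w u \<longleftrightarrow> length w = n \<and> length u = n \<and> (\<forall>i<n. 0 < w ! i) \<and> sorted_wrt (<) u
     \<and> (\<forall>j\<le>2 * n. N j = discrete_moments w u j)"

lemma riesz_atomic_moments:
  "atomic_moments N n w u \<Longrightarrow> degree f \<le> 2 * n \<Longrightarrow> riesz N f = (\<Sum>i<n. w ! i * poly f (u ! i))"
  using riesz_discrete_moments[of "2 * n" N w u f] by (auto simp: atomic_moments_def)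

lemma atomic_moments_distinct: "atomic_moments N n w u \<Longrightarrow> distinct u"
  by (simp add: atomic_moments_def strict_sorted_iff)

lemma atomic_moments_weight:
  assumes am: "atomic_moments N n w u" and k: "k < n"
  shows "riesz N (lagrange_basis u k) = w ! k"
proof -
  have len: "length u = n"
    using am by (simp add: atomic_moments_def)
  have "riesz N (lagrange_basis u k) = (\<Sum>i<n. w ! i * poly (lagrange_basis u k) (u ! i))"
    using degree_lagrange_basis[of k u] k len by (intro riesz_atomic_moments[OF am]) auto
  also have "\<dots> = w ! k"
    using k len atomic_moments_distinct[OF am] by (simp add: poly_lagrange_basis mult_delta_right)
  finally show ?thesis .
qed

lemma atomic_moments_pos_def:
  assumes "n \<ge> 1" and am: "atomic_moments N n w u"
  shows "pos_def_mat (hankel (n - 1) N)"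
  unfolding pos_def_hankel_iff
proof safe
  fix s :: "real poly" assume "s \<noteq> 0" and deg_s: "degree s \<le> n - 1"
  have len: "length u = n" and w_pos: "\<forall>i<n. 0 < w ! i"
    using am by (simp_all add: atomic_moments_def)
  have "\<not> set u \<subseteq> {x. poly s x = 0}"
  proof
    assume "set u \<subseteq> {x. poly s x = 0}"
    then have "card (set u) \<le> degree s"
      using card_poly_roots_bound[OF \<open>s \<noteq> 0\<close>] poly_roots_finite[OF \<open>s \<noteq> 0\<close>] card_mono le_trans by blast
    with deg_s \<open>n \<ge> 1\<close> len distinct_card[OF atomic_moments_distinct[OF am]] show False
      by simp
  qed
  then obtain x where "x \<in> set u" "poly s x \<noteq> 0"
    by auto
  then obtain i where i: "i < n" "poly s (u ! i) \<noteq> 0"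
    using len by (auto simp: in_set_conv_nth)
  have "degree (s * s) \<le> 2 * n"
    using degree_mult_le[of s s] deg_s by linarith
  then have "riesz N (s * s) = (\<Sum>i<n. w ! i * (poly s (u ! i))^2)"
    by (simp add: riesz_atomic_moments[OF am] power2_eq_square)
  also have "\<dots> > 0"
    using i w_pos by (intro sum_pos2[of _ i]) (auto intro: less_imp_le)
  finally show "0 < riesz N (s * s)" .
qed

lemma atomic_moments_annihilator:
  assumes am: "atomic_moments N n w u"
  shows "annihilator N n (\<Prod>i<n. [:- (u ! i), 1:])"
proof -
  let ?q = "\<Prod>i<n. [:- (u ! i), 1:]"
  have deg_q: "degree ?q = n"
    by (subst degree_prod_eq_sum_degree) auto
  have root: "poly ?q (u ! i) = 0" if "i < n" for i
    using that by (auto simp: poly_prod intro!: prod_zero bexI[of _ i])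
  have "riesz N (g * ?q) = 0" if "degree g \<le> n" for g
  proof -
    have "degree (g * ?q) \<le> 2 * n"
      using degree_mult_le[of g ?q] that deg_q by linarith
    then show ?thesis
      by (simp add: riesz_atomic_moments[OF am] root)
  qed
  then show ?thesis
    using deg_q by (auto simp: annihilator_def)
qed

lemma atomic_moments_nodes:
  assumes am: "atomic_moments N n w u" and q: "annihilator N n q"
  shows "set u = {x. poly q x = 0}"
proof -
  have len: "length u = n" and w_pos: "\<forall>i<n. 0 < w ! i" and dist: "distinct u"
    using am atomic_moments_distinct[OF am] by (simp_all add: atomic_moments_def)
  have "poly q (u ! k) = 0" if k: "k < n" for k
  proof -
    have deg_l: "degree (lagrange_basis u k) \<le> n"
      using degree_lagrange_basis[of k u] k len by simp
    have "degree (lagrange_basis u k * q) \<le> 2 * n"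
      using degree_mult_le[of "lagrange_basis u k" q] deg_l q by (simp add: annihilator_def)
    then have "riesz N (lagrange_basis u k * q) = w ! k * poly q (u ! k)"
      using k len dist
      by (simp add: riesz_atomic_moments[OF am] poly_lagrange_basis mult_delta_left mult_delta_right)
    moreover have "riesz N (lagrange_basis u k * q) = 0"
      using q deg_l by (simp add: annihilator_def)
    ultimately show ?thesis
      using w_pos k by force
  qed
  then have sub: "set u \<subseteq> {x. poly q x = 0}"
    using len by (auto simp: in_set_conv_nth)
  moreover have "card {x. poly q x = 0} \<le> card (set u)"
    using card_poly_roots_bound[of q] q len distinct_card[OF dist] by (simp add: annihilator_def)
  ultimately show ?thesis
    using q poly_roots_finite[of q] by (intro card_seteq) (auto simp: annihilator_def)
qed

lemma atomic_moments_unique: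
  assumes "atomic_moments N n w u" and "atomic_moments N n w' u'"
  shows "w = w' \<and> u = u'"
proof -
  have "set u = set u'"
    using assms atomic_moments_annihilator atomic_moments_nodes by metis
  then have "u = u'"
    using assms by (intro sorted_distinct_set_unique) (auto simp: atomic_moments_def strict_sorted_iff)
  moreover have "w ! k = w' ! k" if "k < n" for k
    using assms atomic_moments_weight that \<open>u = u'\<close> by metis
  ultimately show ?thesis
    using assms by (auto simp: atomic_moments_def intro: nth_equalityI)
qed

lemma annihilator_degree:
  assumes pd: "pos_def_mat (hankel (n - 1) N)" and q: "annihilator N n q"
  shows "degree q = n"
proof (rule ccontr)
  assume "degree q \<noteq> n"
  with q have "q \<noteq> 0" "degree q \<le> n - 1"
    by (auto simp: annihilator_def)
  with pd have "0 < riesz N (q * q)"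
    by (simp add: pos_def_hankel_iff)
  with q show False
    by (simp add: annihilator_def)
qed

text \<open>If \<open>q = ((x - a)\<^sup>2 + c) s\<close> with \<open>c \<ge> 0\<close>, then \<open>L(q s) = L(((x - a) s)\<^sup>2) + c L(s\<^sup>2)\<close> is positive,
  although \<open>q\<close> annihilates \<open>s\<close>.\<close>

lemma annihilator_not_dvd:
  assumes pd: "pos_def_mat (hankel (n - 1) N)" and q: "annihilator N n q" and "c \<ge> 0"
  shows "\<not> [:- a, 1:]^2 + [:c:] dvd q"
proof
  assume "[:- a, 1:]^2 + [:c:] dvd q"
  then obtain s where q_eq: "q = ([:- a, 1:]^2 + [:c:]) * s" ..
  have "q \<noteq> 0" and "degree q = n"
    using q annihilator_degree[OF pd q] by (simp_all add: annihilator_def)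
  moreover have "degree ([:- a, 1:]^2 + [:c:]) = 2"
    by (simp add: degree_add_eq_left degree_linear_power)
  ultimately have "s \<noteq> 0" and deg_s: "degree s + 2 = n"
    by (auto simp: q_eq degree_mult_eq)
  define r where "r = [:- a, 1:] * s"
  have "r \<noteq> 0"
    using \<open>s \<noteq> 0\<close> by (simp only: r_def mult_eq_0_iff) simp
  have deg_r: "degree r = n - 1"
    unfolding r_def using \<open>s \<noteq> 0\<close> deg_s by (subst degree_mult_eq) auto
  have "s * q = r * r + [:c:] * (s * s)"
    unfolding q_eq r_def by (simp only: power2_eq_square algebra_simps)
  then have "riesz N (s * q) = riesz N (r * r) + c * riesz N (s * s)"
    by (simp add: riesz_add riesz_smult)
  moreover have "0 < riesz N (r * r)" and "0 < riesz N (s * s)"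
    using pd \<open>r \<noteq> 0\<close> deg_r \<open>s \<noteq> 0\<close> deg_s by (simp_all add: pos_def_hankel_iff)
  moreover have "riesz N (s * q) = 0"
    using q deg_s by (simp add: annihilator_def)
  moreover have "0 \<le> c * riesz N (s * s)"
    using \<open>c \<ge> 0\<close> \<open>0 < riesz N (s * s)\<close> by simp
  ultimately show False
    by linarith
qed

lemma annihilator_card_roots:
  assumes pd: "pos_def_mat (hankel (n - 1) N)" and q: "annihilator N n q"
  shows "card {x. poly q x = 0} = n"
  using card_roots_eq_degree[of q] annihilator_not_dvd[OF pd q] annihilator_degree[OF pd q] q
  by (simp add: annihilator_def)

text \<open>Gauss quadrature: divide by \<open>q\<close> and interpolate the remainder at the roots of \<open>q\<close>.\<close>

lemma annihilator_quadrature: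
  assumes q: "annihilator N n q" and "n \<ge> 1"
    and u: "distinct u" "length u = n" "\<forall>k<n. poly q (u ! k) = 0"
    and deg_f: "degree f \<le> 2 * n"
  shows "riesz N f = (\<Sum>k<n. riesz N (lagrange_basis u k) * poly f (u ! k))"
proof -
  have "q \<noteq> 0"
    using q by (simp add: annihilator_def)
  have "n \<le> degree q"
  proof -
    have "set u \<subseteq> {x. poly q x = 0}"
      using u by (auto simp: in_set_conv_nth)
    then have "card (set u) \<le> card {x. poly q x = 0}"
      using poly_roots_finite[OF \<open>q \<noteq> 0\<close>] by (rule card_mono[rotated])
    then show ?thesis
      using card_poly_roots_bound[OF \<open>q \<noteq> 0\<close>] u distinct_card by fastforce
  qed
  with q have deg_q: "degree q = n"
    by (simp add: annihilator_def)
  define g h where "g = f div q" and "h = f mod q"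
  have f_eq: "f = g * q + h"
    by (simp add: g_def h_def)
  have deg_h: "degree h < n"
    using degree_mod_less[OF \<open>q \<noteq> 0\<close>, of f] deg_q \<open>n \<ge> 1\<close> by (auto simp: h_def)
  have "degree g \<le> n"
  proof (cases "g = 0")
    case False
    have "degree g + n = degree (f - h)"
      using False \<open>q \<noteq> 0\<close> by (simp add: f_eq degree_mult_eq deg_q)
    also have "\<dots> \<le> 2 * n"
      using degree_diff_le_max[of f h] deg_f deg_h by simp
    finally show ?thesis
      by simp
  qed simp
  then have "riesz N f = riesz N h"
    using q by (simp add: f_eq riesz_add annihilator_def)
  also have "\<dots> = (\<Sum>k<n. poly h (u ! k) * riesz N (lagrange_basis u k))"
    by (subst lagrange_interpolation[OF u(1), of h]) (simp_all add: u deg_h riesz_sum riesz_smult)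
  also have "\<dots> = (\<Sum>k<n. riesz N (lagrange_basis u k) * poly f (u ! k))"
    using u(3) by (simp add: f_eq mult.commute)
  finally show ?thesis .
qed

lemma quadrature_weight_pos:
  assumes pd: "pos_def_mat (hankel (n - 1) N)" and q: "annihilator N n q" and "n \<ge> 1"
    and u: "distinct u" "length u = n" "\<forall>k<n. poly q (u ! k) = 0" and k: "k < n"
  shows "0 < riesz N (lagrange_basis u k)"
proof -
  let ?l = "lagrange_basis u k"
  have deg_l: "degree ?l \<le> n - 1"
    using degree_lagrange_basis[of k u] k u by simp
  then have "degree (?l * ?l) \<le> 2 * n"
    using degree_mult_le[of ?l ?l] by linarith
  then have "riesz N (?l * ?l) = riesz N ?l"
    using k u by (simp add: annihilator_quadrature[OF q \<open>n \<ge> 1\<close> u] poly_lagrange_basis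
        mult_delta_left mult_delta_right)
  moreover have "?l \<noteq> 0"
    using poly_lagrange_basis[OF u(1), of k k] k u by auto
  with pd deg_l have "0 < riesz N (?l * ?l)"
    by (simp add: pos_def_hankel_iff)
  ultimately show ?thesis
    by simp
qed

lemma hankel_imp_atomic_moments:
  assumes "n \<ge> 1" and pd: "pos_def_mat (hankel (n - 1) N)" and q: "annihilator N n q"
  shows "\<exists>w u. atomic_moments N n w u"
proof -
  define u where "u = sorted_list_of_set {x. poly q x = 0}"
  define w where "w = map (\<lambda>k. riesz N (lagrange_basis u k)) [0..<n]"
  have "finite {x. poly q x = 0}"
    using q by (simp add: annihilator_def poly_roots_finite)
  then have u_sorted: "sorted_wrt (<) u" and u_dist: "distinct u" and len_u: "length u = n"
    and "set u = {x. poly q x = 0}"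
    using annihilator_card_roots[OF pd q] by (auto simp: u_def)
  then have u_roots: "\<forall>k<n. poly q (u ! k) = 0"
    using nth_mem by blast
  have len_w: "length w = n" and w_nth: "\<And>k. k < n \<Longrightarrow> w ! k = riesz N (lagrange_basis u k)"
    by (simp_all add: w_def)
  have "0 < w ! k" if "k < n" for k
    using quadrature_weight_pos[OF pd q \<open>n \<ge> 1\<close> u_dist len_u u_roots that] w_nth[OF that] by simp
  moreover have "N j = discrete_moments w u j" if "j \<le> 2 * n" for j
  proof -
    have "N j = riesz N (monom 1 j)"
      by (simp add: riesz_monom)
    also have "\<dots> = (\<Sum>k<n. riesz N (lagrange_basis u k) * poly (monom 1 j) (u ! k))"
      by (rule annihilator_quadrature[OF q \<open>n \<ge> 1\<close> u_dist len_u u_roots])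
        (rule order.trans[OF degree_monom_le that])
    also have "\<dots> = discrete_moments w u j"
      by (simp add: discrete_moments_def len_w w_nth poly_monom mult.commute)
    finally show ?thesis .
  qed
  ultimately have "atomic_moments N n w u"
    using len_w len_u u_sorted by (simp add: atomic_moments_def)
  then show ?thesis
    by blast
qed

theorem atomic_moments_iff_hankel:
  assumes "n \<ge> 1"
  shows "(\<exists>w u. atomic_moments N n w u) \<longleftrightarrow> pos_def_mat (hankel (n - 1) N) \<and> det (hankel n N) = 0"
proof
  assume "\<exists>w u. atomic_moments N n w u"
  then show "pos_def_mat (hankel (n - 1) N) \<and> det (hankel n N) = 0"
    using atomic_moments_pos_def[OF assms] atomic_moments_annihilator det_hankel_eq_0_iff by blast
next
  assume "pos_def_mat (hankel (n - 1) N) \<and> det (hankel n N) = 0"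
  then show "\<exists>w u. atomic_moments N n w u"
    using hankel_imp_atomic_moments[OF assms] det_hankel_eq_0_iff by blast
qed

section \<open>Reduction to the moment problem\<close>

lemma moment_equations_iff_atomic_moments:
  assumes "m 0 = 1"
  shows "(length w = n \<and> length u = n \<and> (\<forall>i<n. 0 < w ! i) \<and> sorted_wrt (<) u
          \<and> (\<forall>j\<le>2 * n. Mmap m w u \<sigma> j = M j))
    \<longleftrightarrow> atomic_moments (Mstar m M \<sigma>) n w u"
  using smoothed_moments_eq_iff_Mstar_eq[of m, OF assms]
  by (auto simp: atomic_moments_def Mmap_eq_smoothed_moments)

lemma Ex1_triple_iff_Ex1_last:
  assumes unique: "\<And>a b a' b' c. P a b c \<Longrightarrow> P a' b' c \<Longrightarrow> a = a' \<and> b = b'"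
  shows "(\<exists>!(a, b, c). P a b c) \<longleftrightarrow> (\<exists>!c. \<exists>a b. P a b c)"
proof
  assume "\<exists>!(a, b, c). P a b c"
  then obtain x where Px: "case x of (a, b, c) \<Rightarrow> P a b c"
    and uniq: "\<And>y. (case y of (a, b, c) \<Rightarrow> P a b c) \<Longrightarrow> y = x"
    unfolding Ex1_def by blast
  obtain a b c where x: "x = (a, b, c)"
    by (cases x)
  have "c' = c" if "P a' b' c'" for a' b' c'
    using uniq[of "(a', b', c')"] that x by simp
  moreover have "P a b c"
    using Px x by simp
  ultimately show "\<exists>!c. \<exists>a b. P a b c"
    by blast
next
  assume "\<exists>!c. \<exists>a b. P a b c"
  then obtain a b c where abc: "P a b c" and uniq: "\<And>a' b' c'. P a' b' c' \<Longrightarrow> c' = c"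
    by blast
  show "\<exists>!(a, b, c). P a b c"
  proof (rule ex1I[of _ "(a, b, c)"])
    fix y assume "case y of (a, b, c) \<Rightarrow> P a b c"
    then obtain a' b' c' where y: "y = (a', b', c')" and "P a' b' c'"
      by (cases y) auto
    then show "y = (a, b, c)"
      using uniq unique[OF _ abc] by metis
  qed (simp add: abc)
qed

theorem theorem2p3:
  fixes K :: "real \<Rightarrow> real" and n :: nat and M :: "nat \<Rightarrow> real"
  assumes K_nonneg: "\<And>x. K x \<ge> 0"
    and K_moments: "\<And>j. integrable lborel (\<lambda>x. x ^ j * K x)"
    and m0: "kmom K 0 = 1" and m1: "kmom K 1 = 0" and m2: "kmom K 2 = 1"
    and n: "n \<ge> 1"
  shows "(\<exists>!(w, u, \<sigma>). length w = n \<and> length u = n \<and> (\<forall>i<n. w ! i > 0)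
            \<and> sorted_wrt (<) u \<and> \<sigma> > 0
            \<and> (\<forall>j\<le>2 * n. Mmap (kmom K) w u \<sigma> j = M j))
     \<longleftrightarrow>
     (\<exists>!\<sigma>0. \<sigma>0 > 0 \<and> Pn (kmom K) n M \<sigma>0 = 0
            \<and> pos_def_mat (hankel (n - 1) (Mstar (kmom K) M \<sigma>0)))"
proof -
  let ?A = "\<lambda>w u \<sigma>. 0 < \<sigma> \<and> atomic_moments (Mstar (kmom K) M \<sigma>) n w u"
  have "(length w = n \<and> length u = n \<and> (\<forall>i<n. w ! i > 0) \<and> sorted_wrt (<) u \<and> \<sigma> > 0
          \<and> (\<forall>j\<le>2 * n. Mmap (kmom K) w u \<sigma> j = M j)) \<longleftrightarrow> ?A w u \<sigma>" for w u \<sigma>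
    using moment_equations_iff_atomic_moments[of "kmom K", OF m0] by blast
  moreover have "(\<sigma> > 0 \<and> Pn (kmom K) n M \<sigma> = 0 \<and> pos_def_mat (hankel (n - 1) (Mstar (kmom K) M \<sigma>)))
      \<longleftrightarrow> (\<exists>w u. ?A w u \<sigma>)" for \<sigma>
    using atomic_moments_iff_hankel[OF n] by (auto simp: Pn_def)
  moreover have "(\<exists>!(w, u, \<sigma>). ?A w u \<sigma>) \<longleftrightarrow> (\<exists>!\<sigma>. \<exists>w u. ?A w u \<sigma>)"
    by (rule Ex1_triple_iff_Ex1_last) (auto dest: atomic_moments_unique)
  ultimately show ?thesis
    by simp
qed

end
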